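(* Let the mesh, coefficients $a^{(n)}_{n-k}$ and consistency errors $R^n$ be as in the context (in particular $\tau_{n-1}\le\tau_n$), and let $v\in C([0,T])\cap C^2((0,T])$ with $\int_0^T t|v''(t)|\,dt<\infty$. Put $G^k=\int_{t_{k-3/2}}^{t_{k-1/2}}(t-t_{k-3/2})|v''(t)|\,dt$. Then for every $1\le j\le N$, $$|R^j|\le\sum_{k=1}^{j-1}\big(a^{(j)}_{j-k-1}-a^{(j)}_{j-k}\big)G^k+a^{(j)}_0G^j .$$
   Context: Fix $T>0$, $0<\alpha<1$ and a mesh $0=t_0<t_1<\dots<t_N=T$ with step sizes $\tau_n=t_n-t_{n-1}$ satisfying $\tau_{n-1}\le\tau_n$ for $2\le n\le N$. Set $t_{-1/2}=t_0$, $t_{n-1/2}=t_{n-1}+\tau_n/2$ for $1\le n\le N$, $\tau_{1/2}=\tau_1/2$ and $\tau_{n-1/2}=(\tau_n+\tau_{n-1})/2$ for $n\ge 2$. Let $\omega_\gamma(t)=t^{\gamma-1}/\Gamma(\gamma)$ for $t>0$. For $1\le n\le N$ and $1\le k\le n$ define $$a^{(n)}_{n-k}=\frac{1}{\tau_{k-1/2}}\int_{t_{k-3/2}}^{t_{k-1/2}}\omega_{1-\alpha}(t_{n-1/2}-s)\,ds .$$ The Caputo derivative of order $\alpha$ is ${}^C_0D^\alpha_t v(t)=\int_0^t\omega_{1-\alpha}(t-s)v'(s)\,ds$. The local consistency error of the nonuniform $L1$-type formula at $t_{n-1/2}$ is $$R^n={}^C_0D^\alpha_t v(t_{n-1/2})-\sum_{k=1}^n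 a^{(n)}_{n-k}\big(v(t_{k-1/2})-v(t_{k-3/2})\big),\qquad 1\le n\le N.$$ *)

theory Defs
  imports "HOL-Analysis.Analysis"
begin

definition omega :: "real \<Rightarrow> real \<Rightarrow> real" where
  "omega \<gamma> s = s powr (\<gamma> - 1) / Gamma \<gamma>"

definition tau :: "(nat \<Rightarrow> real) \<Rightarrow> nat \<Rightarrow> real" where
  "tau t n = t n - t (n - 1)"

text \<open>tmid t n is t_(n-1/2); tmid t 0 = t_(-1/2) = t_0.\<close>
definition tmid :: "(nat \<Rightarrow> real) \<Rightarrow> nat \<Rightarrow> real" where
  "tmid t n = (if n = 0 then t 0 else t (n - 1) + tau t n / 2)"

text \<open>tauh t k is tau_(k-1/2).\<close>
definition tauh :: "(nat \<Rightarrow> real) \<Rightarrow> nat \<Rightarrow> real" where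
  "tauh t k = (if k = 1 then tau t 1 / 2 else (tau t k + tau t (k - 1)) / 2)"

text \<open>acoef t \<alpha> n k is a^(n)_(n-k).\<close>
definition acoef :: "(nat \<Rightarrow> real) \<Rightarrow> real \<Rightarrow> nat \<Rightarrow> nat \<Rightarrow> real" where
  "acoef t \<alpha> n k = (1 / tauh t k) *
     integral {tmid t (k - 1)..tmid t k} (\<lambda>s. omega (1 - \<alpha>) (tmid t n - s))"

definition caputo :: "real \<Rightarrow> (real \<Rightarrow> real) \<Rightarrow> real \<Rightarrow> real" where
  "caputo \<alpha> v s = integral {0..s} (\<lambda>r. omega (1 - \<alpha>) (s - r) * deriv v r)"

definition Rerr :: "(nat \<Rightarrow> real) \<Rightarrow> real \<Rightarrow> (real \<Rightarrow> real) \<Rightarrow> nat \<Rightarrow> real" where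
  "Rerr t \<alpha> v n = caputo \<alpha> v (tmid t n)
     - (\<Sum>k=1..n. acoef t \<alpha> n k * (v (tmid t k) - v (tmid t (k - 1))))"

end

theory Submission
  imports Defs
begin

(*
  Write K(s) = omega_{1-alpha}(t_{j-1/2} - s) and [l_k, r_k] = [t_{k-3/2}, t_{k-1/2}]. The coefficient
  a_k = a^(j)_{j-k} is the mean of K over the k-th cell, so R^j = sum_k integral (K - a_k) v'.
  On each cell the weight W_k(u) = integral_{l_k}^u (K - a_k) vanishes at both ends, and
  integration by parts turns the cell contribution into -integral W_k v''. As K is increasing,
  |W_k(u)| <= (a_k - K(l_k)) (u - l_k). Convexity of K together with the monotone step sizes gives
  a_k - K(l_k) <= a_{k+1} - a_k for k < j, while positivity of K gives a_j - K(l_j) <= a_j.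
  The singularity of v' at 0 is harmless because s v'(s) -> 0, a consequence of
  integral s |v''(s)| < infinity.
*)

lemma has_integral_sum_consecutive:
  fixes m :: "nat \<Rightarrow> real" and f :: "real \<Rightarrow> 'a::banach"
  assumes "\<And>k. 1 \<le> k \<Longrightarrow> k \<le> n \<Longrightarrow> m (k - 1) \<le> m k"
    and "\<And>k. 1 \<le> k \<Longrightarrow> k \<le> n \<Longrightarrow> f integrable_on {m (k - 1)..m k}"
  shows "(f has_integral (\<Sum>k=1..n. integral {m (k - 1)..m k} f)) {m 0..m n}"
  using assms
proof (induction n)
  case 0
  then show ?case
    by (simp add: has_integral_refl)
next
  case (Suc n)
  note step = Suc.prems(1)
  have "m 0 \<le> m i" if "i \<le> n" for i
    using that
  proof (induction i)
    case (Suc i)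
    then show ?case
      using step[of "Suc i"] by simp
  qed simp
  then have "(f has_integral (\<Sum>k=1..n. integral {m (k - 1)..m k} f)
      + integral {m n..m (Suc n)} f) {m 0..m (Suc n)}"
    using Suc step[of "Suc n"] Suc.prems(2)[of "Suc n"]
    by (intro has_integral_combine[of _ "m n"] integrable_integral) auto
  then show ?case
    by simp
qed

definition kernel_primitive :: "real \<Rightarrow> real \<Rightarrow> real \<Rightarrow> real" where
  "kernel_primitive \<alpha> x s = - ((x - s) powr (1 - \<alpha>)) / Gamma (2 - \<alpha>)"

definition kernel_mean :: "real \<Rightarrow> real \<Rightarrow> real \<Rightarrow> real \<Rightarrow> real" where
  "kernel_mean \<alpha> x l r = (kernel_primitive \<alpha> x r - kernel_primitive \<alpha> x l) / (r - l)"

lemma omega_one_minus: "omega (1 - \<alpha>) y = y powr (-\<alpha>) / Gamma (1 - \<alpha>)"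
  by (simp add: omega_def)

lemma Gamma_one_minus_pos: "(\<alpha>::real) < 1 \<Longrightarrow> 0 < Gamma (1 - \<alpha>)"
  by (rule Gamma_real_pos) simp

lemma Gamma_two_minus_pos: "(\<alpha>::real) < 1 \<Longrightarrow> 0 < Gamma (2 - \<alpha>)"
  by (rule Gamma_real_pos) simp

lemma Gamma_two_minus:
  assumes "(\<alpha>::real) < 1"
  shows "Gamma (2 - \<alpha>) = (1 - \<alpha>) * Gamma (1 - \<alpha>)"
proof -
  have "1 - \<alpha> \<notin> \<int>\<^sub>\<le>\<^sub>0"
    using assms nonpos_Ints_nonpos by fastforce
  from Gamma_plus1[OF this] show ?thesis
    by (simp add: algebra_simps)
qed

lemma kernel_primitive_has_derivative:
  assumes "\<alpha> < 1" "s < x"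
  shows "(kernel_primitive \<alpha> x has_real_derivative omega (1 - \<alpha>) (x - s)) (at s)"
proof -
  have "Gamma (2 - \<alpha>) \<noteq> 0"
    using Gamma_two_minus_pos[OF assms(1)] by simp
  then have "((\<lambda>s. - ((x - s) powr (1 - \<alpha>)) / Gamma (2 - \<alpha>)) has_real_derivative
      - ((1 - \<alpha>) * (x - s) powr (1 - \<alpha> - 1) * (-1)) / Gamma (2 - \<alpha>)) (at s)"
    using assms by (auto intro!: derivative_eq_intros)
  moreover have "- ((1 - \<alpha>) * (x - s) powr (1 - \<alpha> - 1) * (-1)) / Gamma (2 - \<alpha>)
      = omega (1 - \<alpha>) (x - s)"
    using assms Gamma_one_minus_pos[OF assms(1)] by (simp add: Gamma_two_minus omega_one_minus)
  ultimately show ?thesis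
    unfolding kernel_primitive_def by simp
qed

lemma continuous_on_kernel_primitive:
  assumes "\<alpha> < 1" "S \<subseteq> {..x}"
  shows "continuous_on S (kernel_primitive \<alpha> x)"
proof -
  have "Gamma (2 - \<alpha>) \<noteq> 0"
    using Gamma_two_minus_pos[OF assms(1)] by simp
  then show ?thesis
    unfolding kernel_primitive_def using assms
    by (intro continuous_on_divide continuous_on_minus continuous_on_powr' continuous_intros) auto
qed

lemma kernel_primitive_has_integral:
  assumes "\<alpha> < 1" "l \<le> r" "r \<le> x"
  shows "((\<lambda>s. omega (1 - \<alpha>) (x - s))
           has_integral (kernel_primitive \<alpha> x r - kernel_primitive \<alpha> x l)) {l..r}"
  using assms
  by (intro fundamental_theorem_of_calculus_interior continuous_on_kernel_primitive)
     (auto simp: has_real_derivative_iff_has_vector_derivative[symmetric]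
           intro!: kernel_primitive_has_derivative)

lemma kernel_primitive_mvt:
  assumes "\<alpha> < 1" "l < u" "u \<le> x"
  obtains \<xi> where "l < \<xi>" "\<xi> < u"
    "kernel_primitive \<alpha> x u - kernel_primitive \<alpha> x l = (u - l) * omega (1 - \<alpha>) (x - \<xi>)"
proof -
  have "continuous_on {l..u} (kernel_primitive \<alpha> x)"
    using assms by (intro continuous_on_kernel_primitive) auto
  moreover have "kernel_primitive \<alpha> x differentiable (at z)" if "l < z" "z < u" for z
    using kernel_primitive_has_derivative[OF assms(1), of z x] that assms
    unfolding real_differentiable_def by auto
  ultimately obtain L z where z: "l < z" "z < u"
    "(kernel_primitive \<alpha> x has_real_derivative L) (at z)"
    "kernel_primitive \<alpha> x u - kernel_primitive \<alpha> x l = (u - l) * L"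
    using MVT[OF assms(2)] by blast
  moreover have "L = omega (1 - \<alpha>) (x - z)"
    using DERIV_unique[OF z(3) kernel_primitive_has_derivative[OF assms(1), of z x]] z assms
    by auto
  ultimately show ?thesis
    using that by blast
qed

lemma omega_one_minus_pos:
  assumes "\<alpha> < 1" "s < x"
  shows "0 < omega (1 - \<alpha>) (x - s)"
  using assms Gamma_one_minus_pos[OF assms(1)] by (simp add: omega_one_minus)

lemma omega_one_minus_mono:
  assumes "0 < \<alpha>" "\<alpha> < 1" "s\<^sub>1 \<le> s\<^sub>2" "s\<^sub>2 < x"
  shows "omega (1 - \<alpha>) (x - s\<^sub>1) \<le> omega (1 - \<alpha>) (x - s\<^sub>2)"
  unfolding omega_one_minus using assms Gamma_one_minus_pos[OF assms(2)]
  by (intro divide_right_mono powr_mono2') auto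

lemma convex_on_powr_neg:
  assumes "0 < (\<alpha>::real)"
  shows "convex_on {0<..} (\<lambda>y::real. y powr (-\<alpha>))"
proof (rule convex_on_realI[where f' = "\<lambda>y. -\<alpha> * y powr (-\<alpha> - 1)"])
  fix y :: real
  assume "y \<in> {0<..}"
  then show "((\<lambda>y. y powr (-\<alpha>)) has_real_derivative -\<alpha> * y powr (-\<alpha> - 1)) (at y)"
    using has_real_derivative_powr[of y "-\<alpha>"] by simp
next
  fix y z :: real
  assume "y \<in> {0<..}" "z \<in> {0<..}" "y \<le> z"
  then have "z powr (-\<alpha> - 1) \<le> y powr (-\<alpha> - 1)"
    using assms by (intro powr_mono2') auto
  then show "-\<alpha> * y powr (-\<alpha> - 1) \<le> -\<alpha> * z powr (-\<alpha> - 1)"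
    using assms by simp
qed simp

lemma omega_one_minus_midpoint_convex:
  assumes "0 < \<alpha>" "\<alpha> < 1" "l \<le> u" "u - l \<le> h" "u + h < x"
  shows "2 * omega (1 - \<alpha>) (x - u) \<le> omega (1 - \<alpha>) (x - (u + h)) + omega (1 - \<alpha>) (x - l)"
proof -
  define a b c where "a = x - (u + h)" and "b = x - u" and "c = x - l"
  define d where "d = 2 * b - c"
  have pos: "0 < a" "a \<le> d" "0 < c"
    using assms by (auto simp: a_def b_def c_def d_def)
  have "d powr (-\<alpha>) \<le> a powr (-\<alpha>)"
    using pos assms by (intro powr_mono2') auto
  moreover have "(\<lambda>y. y powr (-\<alpha>)) ((1 - 1/2) *\<^sub>R d + (1/2) *\<^sub>R c)
      \<le> (1 - 1/2) * d powr (-\<alpha>) + (1/2) * c powr (-\<alpha>)"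
    by (rule convex_onD[OF convex_on_powr_neg[OF assms(1)]]) (use pos in auto)
  moreover have "(1 - 1/2) *\<^sub>R d + (1/2::real) *\<^sub>R c = b"
    by (simp add: d_def field_simps)
  ultimately have "2 * b powr (-\<alpha>) \<le> a powr (-\<alpha>) + c powr (-\<alpha>)"
    by simp
  then show ?thesis
    unfolding omega_one_minus a_def b_def c_def using Gamma_one_minus_pos[OF assms(2)]
    by (simp add: add_divide_distrib[symmetric] divide_right_mono)
qed

lemma omega_one_minus_le_kernel_mean:
  assumes "0 < \<alpha>" "\<alpha> < 1" "l < u" "u \<le> x"
  shows "omega (1 - \<alpha>) (x - l) \<le> kernel_mean \<alpha> x l u"
proof -
  obtain \<xi> where \<xi>: "l < \<xi>" "\<xi> < u"
    "kernel_primitive \<alpha> x u - kernel_primitive \<alpha> x l = (u - l) * omega (1 - \<alpha>) (x - \<xi>)"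
    using kernel_primitive_mvt[OF assms(2-4)] .
  have "omega (1 - \<alpha>) (x - l) \<le> omega (1 - \<alpha>) (x - \<xi>)"
    using \<xi> assms by (intro omega_one_minus_mono) auto
  then show ?thesis
    using \<xi> by (simp add: kernel_mean_def)
qed

lemma kernel_mean_mono:
  assumes "0 < \<alpha>" "\<alpha> < 1" "l < u" "u \<le> r" "r \<le> x"
  shows "kernel_mean \<alpha> x l u \<le> kernel_mean \<alpha> x l r"
proof (cases "u = r")
  case False
  then have ur: "u < r"
    using assms by simp
  define P where "P = kernel_primitive \<alpha> x"
  obtain \<xi> where \<xi>: "l < \<xi>" "\<xi> < u" "P u - P l = (u - l) * omega (1 - \<alpha>) (x - \<xi>)"
    using kernel_primitive_mvt[OF assms(2,3), of x] assms unfolding P_def by auto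
  obtain \<eta> where \<eta>: "u < \<eta>" "\<eta> < r" "P r - P u = (r - u) * omega (1 - \<alpha>) (x - \<eta>)"
    using kernel_primitive_mvt[OF assms(2) ur assms(5)] unfolding P_def by auto
  have "omega (1 - \<alpha>) (x - \<xi>) \<le> omega (1 - \<alpha>) (x - \<eta>)"
    using \<xi> \<eta> assms by (intro omega_one_minus_mono) auto
  then have "(P u - P l) * (r - u) \<le> (P r - P u) * (u - l)"
    using \<xi> \<eta> by (simp add: mult_left_mono)
  then have "(P u - P l) * (r - l) \<le> (P r - P l) * (u - l)"
    by (simp add: algebra_simps)
  then show ?thesis
    using ur assms unfolding kernel_mean_def P_def by (simp add: field_simps)
qed simp

text \<open>The auxiliary function \<phi> compares the shifted primitive with twice the primitive;
  the midpoint convexity of the kernel makes its derivative nonnegative.\<close>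

lemma kernel_primitive_second_difference:
  assumes "0 < \<alpha>" "\<alpha> < 1" "l < r" "h = r - l" "r + h \<le> x"
  shows "2 * (kernel_primitive \<alpha> x r - kernel_primitive \<alpha> x l) - h * omega (1 - \<alpha>) (x - l)
      \<le> kernel_primitive \<alpha> x (r + h) - kernel_primitive \<alpha> x r"
proof -
  define P where "P = kernel_primitive \<alpha>"
  define \<phi> where "\<phi> u = P (x - h) u - P (x - h) l - 2 * (P x u - P x l)
      + (u - l) * omega (1 - \<alpha>) (x - l)" for u
  have shift: "P (x - h) u = P x (u + h)" for u
    by (simp add: P_def kernel_primitive_def algebra_simps)
  have "continuous_on {l..r} \<phi>"
    unfolding \<phi>_def P_def using assms by (intro continuous_intros continuous_on_kernel_primitive) auto
  moreover have der: "(\<phi> has_real_derivative omega (1 - \<alpha>) (x - (z + h))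
      - 2 * omega (1 - \<alpha>) (x - z) + omega (1 - \<alpha>) (x - l)) (at z)" if "l < z" "z < r" for z
    unfolding \<phi>_def P_def using that assms
    by (auto intro!: derivative_eq_intros kernel_primitive_has_derivative simp: algebra_simps)
  ultimately obtain L z where z: "l < z" "z < r" "(\<phi> has_real_derivative L) (at z)"
    "\<phi> r - \<phi> l = (r - l) * L"
    using MVT[OF assms(3)] unfolding real_differentiable_def by blast
  have "2 * omega (1 - \<alpha>) (x - z) \<le> omega (1 - \<alpha>) (x - (z + h)) + omega (1 - \<alpha>) (x - l)"
    using z assms by (intro omega_one_minus_midpoint_convex) auto
  then have "0 \<le> L"
    using DERIV_unique[OF z(3) der[OF z(1,2)]] by simp
  then have "0 \<le> \<phi> r"
    using z by (simp add: \<phi>_def)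
  moreover have "\<phi> r = P x (r + h) - P x r - 2 * (P x r - P x l) + h * omega (1 - \<alpha>) (x - l)"
    unfolding \<phi>_def shift using assms(4) by simp
  ultimately show ?thesis
    unfolding P_def by simp
qed

lemma kernel_mean_succ_lower_bound:
  assumes "0 < \<alpha>" "\<alpha> < 1" "l < r" "r - l \<le> h" "r + h \<le> x"
  shows "2 * kernel_mean \<alpha> x l r - omega (1 - \<alpha>) (x - l) \<le> kernel_mean \<alpha> x r (r + h)"
proof -
  define P where "P = kernel_primitive \<alpha> x"
  have "2 * (P r - P l) - (r - l) * omega (1 - \<alpha>) (x - l) \<le> P (r + (r - l)) - P r"
    unfolding P_def using assms by (intro kernel_primitive_second_difference) auto
  then have "(2 * (P r - P l) - (r - l) * omega (1 - \<alpha>) (x - l)) / (r - l)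
      \<le> (P (r + (r - l)) - P r) / (r + (r - l) - r)"
    using assms by (simp add: divide_right_mono)
  then have "2 * kernel_mean \<alpha> x l r - omega (1 - \<alpha>) (x - l) \<le> kernel_mean \<alpha> x r (r + (r - l))"
    using assms unfolding kernel_mean_def P_def by (simp add: diff_divide_distrib)
  also have "\<dots> \<le> kernel_mean \<alpha> x r (r + h)"
    using assms by (intro kernel_mean_mono) auto
  finally show ?thesis .
qed

lemma kernel_primitive_deviation_bound:
  assumes "0 < \<alpha>" "\<alpha> < 1" "l < r" "r \<le> x" "l \<le> u" "u \<le> r"
    and "kernel_mean \<alpha> x l r - omega (1 - \<alpha>) (x - l) \<le> c"
  shows "\<bar>kernel_primitive \<alpha> x u - kernel_primitive \<alpha> x l - kernel_mean \<alpha> x l r * (u - l)\<bar>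
      \<le> c * (u - l)"
proof (cases "u = l")
  case False
  then have ul: "l < u"
    using assms by simp
  have "kernel_mean \<alpha> x l r - c \<le> kernel_mean \<alpha> x l u"
    using omega_one_minus_le_kernel_mean[OF assms(1,2) ul, of x] assms by simp
  moreover have "kernel_mean \<alpha> x l u \<le> kernel_mean \<alpha> x l r"
    using kernel_mean_mono[OF assms(1,2) ul assms(6,4)] .
  ultimately show ?thesis
    using ul unfolding kernel_mean_def[of \<alpha> x l u] by (simp add: field_simps abs_le_iff)
qed simp

locale weakly_regular =
  fixes T :: real and v v' v'' :: "real \<Rightarrow> real"
  assumes T_pos: "0 < T"
    and v_cont: "continuous_on {0..T} v"
    and v1: "\<And>s. s \<in> {0<..T} \<Longrightarrow> (v has_real_derivative v' s) (at s within {0..T})"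
    and v2: "\<And>s. s \<in> {0<..T} \<Longrightarrow> (v' has_real_derivative v'' s) (at s within {0..T})"
    and v2_cont: "continuous_on {0<..T} v''"
    and v2_int: "(\<lambda>s. s * \<bar>v'' s\<bar>) integrable_on {0..T}"
begin

lemma v1_at: "0 < s \<Longrightarrow> s < T \<Longrightarrow> (v has_real_derivative v' s) (at s)"
  using v1[of s] at_within_Icc_at[of 0 s T] by auto

lemma v2_at: "0 < s \<Longrightarrow> s < T \<Longrightarrow> (v' has_real_derivative v'' s) (at s)"
  using v2[of s] at_within_Icc_at[of 0 s T] by auto

lemma continuous_within_v': "0 < s \<Longrightarrow> s \<le> T \<Longrightarrow> continuous (at s within {0..T}) v'"
  using v2[of s] DERIV_continuous by auto

lemma continuous_on_v'': "0 < a \<Longrightarrow> b \<le> T \<Longrightarrow> continuous_on {a..b} v''"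
  by (rule continuous_on_subset[OF v2_cont]) auto

lemma v'_has_integral:
  "0 < s \<Longrightarrow> s \<le> b \<Longrightarrow> b \<le> T \<Longrightarrow> (v'' has_integral (v' b - v' s)) {s..b}"
  by (intro fundamental_theorem_of_calculus)
     (auto simp: has_real_derivative_iff_has_vector_derivative[symmetric]
           intro!: has_field_derivative_subset[OF v2])

lemma v_has_integral:
  "0 \<le> l \<Longrightarrow> l \<le> r \<Longrightarrow> r \<le> T \<Longrightarrow> (v' has_integral (v r - v l)) {l..r}"
  by (intro fundamental_theorem_of_calculus_interior continuous_on_subset[OF v_cont])
     (auto simp: has_real_derivative_iff_has_vector_derivative[symmetric] intro!: v1_at)

lemma weighted_v''_integrable:
  assumes "0 \<le> l" "l \<le> r" "r \<le> T"
  shows "(\<lambda>s. (s - l) * \<bar>v'' s\<bar>) integrable_on {l..r}"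
proof (cases "l = 0")
  case True
  then show ?thesis
    using integrable_on_subinterval[OF v2_int, of 0 r] assms by simp
next
  case False
  then show ?thesis
    using assms by (intro integrable_continuous_interval continuous_intros continuous_on_v'') auto
qed

lemma abs_mult_v'_le:
  assumes "0 < s" "s \<le> b" "b \<le> T"
  shows "s * \<bar>v' s\<bar> \<le> s * \<bar>v' b\<bar> + integral {0..b} (\<lambda>u. u * \<bar>v'' u\<bar>)"
proof -
  have ftc: "(v'' has_integral (v' b - v' s)) {s..b}"
    using v'_has_integral assms by auto
  have int_abs: "(\<lambda>u. \<bar>v'' u\<bar>) integrable_on {s..b}"
    using assms by (intro integrable_continuous_interval continuous_intros continuous_on_v'') auto
  have int_weighted: "(\<lambda>u. u * \<bar>v'' u\<bar>) integrable_on {s..b}"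
    using assms by (intro integrable_continuous_interval continuous_intros continuous_on_v'') auto
  have "s * \<bar>v' b - v' s\<bar> \<le> s * integral {s..b} (\<lambda>u. \<bar>v'' u\<bar>)"
    using integral_norm_bound_integral[OF has_integral_integrable[OF ftc] int_abs] assms
      integral_unique[OF ftc] by (simp add: mult_left_mono)
  also have "\<dots> = integral {s..b} (\<lambda>u. s * \<bar>v'' u\<bar>)"
    by simp
  also have "\<dots> \<le> integral {s..b} (\<lambda>u. u * \<bar>v'' u\<bar>)"
    using integrable_on_mult_right[OF int_abs, of s] int_weighted
    by (intro integral_le) (auto intro: mult_right_mono)
  also have "\<dots> \<le> integral {0..b} (\<lambda>u. u * \<bar>v'' u\<bar>)"
    using assms integrable_on_subinterval[OF v2_int, of 0 b]
    by (intro integral_subset_le int_weighted) auto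
  finally have "s * \<bar>v' b - v' s\<bar> \<le> integral {0..b} (\<lambda>u. u * \<bar>v'' u\<bar>)" .
  moreover have "\<bar>v' s\<bar> \<le> \<bar>v' b\<bar> + \<bar>v' b - v' s\<bar>"
    by linarith
  then have "s * \<bar>v' s\<bar> \<le> s * \<bar>v' b\<bar> + s * \<bar>v' b - v' s\<bar>"
    using assms mult_left_mono[of "\<bar>v' s\<bar>" "\<bar>v' b\<bar> + \<bar>v' b - v' s\<bar>" s]
    by (simp add: distrib_left)
  ultimately show ?thesis
    by linarith
qed

lemma tendsto_mult_v'_at_right_0: "((\<lambda>s. s * v' s) \<longlongrightarrow> 0) (at_right 0)"
proof (rule tendstoI)
  fix e :: real
  assume e: "0 < e"
  define g where "g b = integral {0..b} (\<lambda>u. u * \<bar>v'' u\<bar>)" for b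
  have "continuous (at 0 within {0..T}) g"
    using indefinite_integral_continuous_1[OF v2_int] T_pos
    unfolding g_def by (simp add: continuous_on_eq_continuous_within)
  then obtain \<eta> where \<eta>: "0 < \<eta>" "\<forall>b\<in>{0..T}. dist b 0 < \<eta> \<longrightarrow> dist (g b) (g 0) < e / 2"
    unfolding continuous_within_eps_delta using e by (meson half_gt_zero)
  define b where "b = min (\<eta> / 2) T"
  have b: "0 < b" "b \<le> T"
    using \<eta> T_pos by (auto simp: b_def)
  moreover have "dist b 0 < \<eta>"
    using \<eta> b by (simp add: b_def dist_real_def)
  ultimately have "dist (g b) (g 0) < e / 2"
    using \<eta> by simp
  then have gb: "g b < e / 2"
    by (simp add: g_def dist_real_def)
  define M where "M = \<bar>v' b\<bar> + 1"
  have M: "0 < M"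
    by (simp add: M_def add_pos_nonneg)
  have "s * \<bar>v' s\<bar> < e" if "0 < s" "s < min b (e / (2 * M))" for s
  proof -
    have "s * \<bar>v' b\<bar> < e / 2"
    proof -
      have "s * \<bar>v' b\<bar> \<le> s * M"
        using that by (simp add: M_def)
      also have "\<dots> < e / (2 * M) * M"
        using that by (intro mult_strict_right_mono) (auto simp: M_def)
      also have "\<dots> = e / 2"
        using M by simp
      finally show ?thesis .
    qed
    then show ?thesis
      using abs_mult_v'_le[of s b] that b gb unfolding g_def by simp
  qed
  moreover have "0 < min b (e / (2 * M))"
    using b e M by simp
  ultimately show "eventually (\<lambda>s. dist (s * v' s) 0 < e) (at_right 0)"
    unfolding eventually_at_right_field dist_real_def
    by (intro exI[of _ "min b (e / (2 * M))"]) (auto simp: abs_mult)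
qed

lemma integrable_weight_mult_v'':
  assumes "0 \<le> l" "l < r" "r \<le> T" "continuous_on {l..r} W"
    and "\<And>u. l \<le> u \<Longrightarrow> u \<le> r \<Longrightarrow> \<bar>W u\<bar> \<le> c * (u - l)"
  shows "(\<lambda>s. W s * v'' s) integrable_on {l..r}"
proof -
  have left_end: "negligible (({l..r} - {l<..r}) \<union> ({l<..r} - {l..r}))"
    by (rule negligible_subset[of "{l}"]) auto
  have "(\<lambda>s. c * ((s - l) * \<bar>v'' s\<bar>)) integrable_on {l..r}"
    using weighted_v''_integrable[OF assms(1) less_imp_le[OF assms(2)] assms(3)]
    by (rule integrable_on_mult_right)
  then have majorant: "(\<lambda>s. c * ((s - l) * \<bar>v'' s\<bar>)) integrable_on {l<..r}"
    by (rule integrable_spike_set_eq[OF left_end, THEN iffD1])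
  have "continuous_on {l<..r} (\<lambda>s. W s * v'' s)"
    using assms(1,3)
    by (intro continuous_on_mult continuous_on_subset[OF assms(4)] continuous_on_subset[OF v2_cont])
       auto
  then have measurable: "(\<lambda>s. W s * v'' s) \<in> borel_measurable (lebesgue_on {l<..r})"
    by (rule continuous_imp_measurable_on_sets_lebesgue) simp
  have bound: "norm (W s * v'' s) \<le> c * ((s - l) * \<bar>v'' s\<bar>)" if "s \<in> {l<..r}" for s
    using assms(5)[of s] that mult_right_mono[of "\<bar>W s\<bar>" "c * (s - l)" "\<bar>v'' s\<bar>"]
    by (simp add: abs_mult mult.assoc)
  have "(\<lambda>s. W s * v'' s) integrable_on {l<..r}"
    by (rule measurable_bounded_by_integrable_imp_integrable[OF measurable majorant bound]) auto
  then show ?thesis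
    by (rule integrable_spike_set_eq[OF left_end, THEN iffD2])
qed

lemma abs_integral_weight_mult_v''_le:
  assumes "0 \<le> l" "l < r" "r \<le> T" "continuous_on {l..r} W"
    and "\<And>u. l \<le> u \<Longrightarrow> u \<le> r \<Longrightarrow> \<bar>W u\<bar> \<le> c * (u - l)"
  shows "\<bar>integral {l..r} (\<lambda>s. W s * v'' s)\<bar> \<le> c * integral {l..r} (\<lambda>s. (s - l) * \<bar>v'' s\<bar>)"
proof -
  have int: "(\<lambda>s. (s - l) * \<bar>v'' s\<bar>) integrable_on {l..r}"
    using weighted_v''_integrable assms by simp
  have "norm (integral {l..r} (\<lambda>s. W s * v'' s)) \<le> integral {l..r} (\<lambda>s. c * ((s - l) * \<bar>v'' s\<bar>))"
  proof (rule integral_norm_bound_integral)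
    show "(\<lambda>s. W s * v'' s) integrable_on {l..r}"
      using integrable_weight_mult_v''[OF assms] .
    show "(\<lambda>s. c * ((s - l) * \<bar>v'' s\<bar>)) integrable_on {l..r}"
      using integrable_on_mult_right[OF int] .
    show "norm (W s * v'' s) \<le> c * ((s - l) * \<bar>v'' s\<bar>)" if "s \<in> {l..r}" for s
      using assms(5)[of s] that mult_right_mono[of "\<bar>W s\<bar>" "c * (s - l)" "\<bar>v'' s\<bar>"]
      by (simp add: abs_mult mult.assoc)
  qed
  then show ?thesis
    by simp
qed

text \<open>At the left end l = 0 the factor v' may blow up; the bound
  \<bar>W s\<bar> \<le> c s together with s v'(s) \<rightarrow> 0 keeps the product continuous.\<close>

lemma continuous_on_weight_mult_v':
  assumes "0 \<le> l" "l < r" "r \<le> T" "continuous_on {l..r} W" "W l = 0"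
    and "\<And>u. l \<le> u \<Longrightarrow> u \<le> r \<Longrightarrow> \<bar>W u\<bar> \<le> c * (u - l)"
  shows "continuous_on {l..r} (\<lambda>s. W s * v' s)"
  unfolding continuous_on_eq_continuous_within
proof
  fix s
  assume s: "s \<in> {l..r}"
  have W_at_s: "continuous (at s within {l..r}) W"
    using assms(4) s continuous_on_eq_continuous_within by blast
  show "continuous (at s within {l..r}) (\<lambda>s. W s * v' s)"
  proof (cases "0 < s")
    case True
    then have "continuous (at s within {l..r}) v'"
      using continuous_within_v'[of s] s assms continuous_within_subset[of s "{0..T}" v' "{l..r}"]
      by auto
    then show ?thesis
      using W_at_s by (intro continuous_intros)
  next
    case False
    then have s0: "s = 0" "l = 0"
      using s assms by auto
    have "((\<lambda>s. c * \<bar>s * v' s\<bar>) \<longlongrightarrow> 0) (at 0 within {0..r})"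
      using tendsto_mult_right_zero[OF tendsto_rabs_zero[OF tendsto_mult_v'_at_right_0], of c]
        at_within_Icc_at_right[of 0 r] assms(2) s0 by simp
    moreover have "\<forall>\<^sub>F u in at 0 within {0..r}. norm (W u * v' u) \<le> c * \<bar>u * v' u\<bar>"
      unfolding eventually_at_filter
    proof (rule always_eventually, intro allI impI)
      fix u
      assume "u \<noteq> 0" "u \<in> {0..r}"
      then show "norm (W u * v' u) \<le> c * \<bar>u * v' u\<bar>"
        using assms(6)[of u] s0 mult_right_mono[of "\<bar>W u\<bar>" "c * u" "\<bar>v' u\<bar>"]
        by (simp add: abs_mult mult.assoc)
    qed
    ultimately have "((\<lambda>s. W s * v' s) \<longlongrightarrow> 0) (at 0 within {0..r})"
      by (rule Lim_null_comparison[rotated])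
    then show ?thesis
      using s0 assms(5) by (simp add: continuous_within)
  qed
qed

lemma has_integral_by_parts_vanishing_weight:
  assumes "0 \<le> l" "l < r" "r \<le> T" "continuous_on {l..r} W" "W l = 0" "W r = 0"
    and "\<And>s. l < s \<Longrightarrow> s < r \<Longrightarrow> (W has_real_derivative w s) (at s)"
    and "\<And>u. l \<le> u \<Longrightarrow> u \<le> r \<Longrightarrow> \<bar>W u\<bar> \<le> c * (u - l)"
  shows "((\<lambda>s. w s * v' s) has_integral - integral {l..r} (\<lambda>s. W s * v'' s)) {l..r}"
proof -
  have "((\<lambda>s. w s * v' s + W s * v'' s) has_integral (W r * v' r - W l * v' l)) {l..r}"
  proof (rule fundamental_theorem_of_calculus_interior)
    show "continuous_on {l..r} (\<lambda>s. W s * v' s)"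
      using continuous_on_weight_mult_v' assms by blast
    show "((\<lambda>s. W s * v' s) has_vector_derivative w s * v' s + W s * v'' s) (at s)"
      if "s \<in> {l<..<r}" for s
      using DERIV_mult[OF assms(7) v2_at, of s] that assms
      by (auto simp: has_real_derivative_iff_has_vector_derivative[symmetric] mult.commute)
  qed (use assms in simp)
  then have "((\<lambda>s. w s * v' s + W s * v'' s) has_integral 0) {l..r}"
    using assms by simp
  from has_integral_diff[OF this integrable_integral[OF integrable_weight_mult_v''[OF assms(1-4,8)]]]
  show ?thesis
    by simp
qed

lemma kernel_cell_error:
  assumes "0 < \<alpha>" "\<alpha> < 1" "0 \<le> l" "l < r" "r \<le> x" "x \<le> T"
    and "kernel_mean \<alpha> x l r - omega (1 - \<alpha>) (x - l) \<le> c"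
  shows "(\<lambda>s. omega (1 - \<alpha>) (x - s) * v' s) integrable_on {l..r}"
    and "\<bar>integral {l..r} (\<lambda>s. omega (1 - \<alpha>) (x - s) * v' s) - kernel_mean \<alpha> x l r * (v r - v l)\<bar>
      \<le> c * integral {l..r} (\<lambda>s. (s - l) * \<bar>v'' s\<bar>)"
proof -
  define a where "a = kernel_mean \<alpha> x l r"
  define W where "W u = kernel_primitive \<alpha> x u - kernel_primitive \<alpha> x l - a * (u - l)" for u
  have rT: "r \<le> T"
    using assms by simp
  have Wc: "continuous_on {l..r} W"
    unfolding W_def using assms by (intro continuous_intros continuous_on_kernel_primitive) auto
  have Wb: "\<bar>W u\<bar> \<le> c * (u - l)" if "l \<le> u" "u \<le> r" for u
    unfolding W_def a_def using assms that by (intro kernel_primitive_deviation_bound) auto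
  have Wl: "W l = 0"
    by (simp add: W_def)
  have Wr: "W r = 0"
    using assms by (simp add: W_def a_def kernel_mean_def)
  have Wd: "(W has_real_derivative omega (1 - \<alpha>) (x - s) - a) (at s)" if "l < s" "s < r" for s
    unfolding W_def using that assms
    by (auto intro!: derivative_eq_intros kernel_primitive_has_derivative)
  have "((\<lambda>s. (omega (1 - \<alpha>) (x - s) - a) * v' s)
      has_integral - integral {l..r} (\<lambda>s. W s * v'' s)) {l..r}"
    by (rule has_integral_by_parts_vanishing_weight[OF assms(3,4) rT Wc Wl Wr Wd Wb])
  moreover have "((\<lambda>s. a * v' s) has_integral a * (v r - v l)) {l..r}"
    using v_has_integral[of l r] assms rT by (intro has_integral_mult_right) auto
  ultimately have "((\<lambda>s. (omega (1 - \<alpha>) (x - s) - a) * v' s + a * v' s)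
      has_integral - integral {l..r} (\<lambda>s. W s * v'' s) + a * (v r - v l)) {l..r}"
    by (rule has_integral_add)
  moreover have "(\<lambda>s. (omega (1 - \<alpha>) (x - s) - a) * v' s + a * v' s)
      = (\<lambda>s. omega (1 - \<alpha>) (x - s) * v' s)"
    by (simp add: algebra_simps)
  ultimately have cell: "((\<lambda>s. omega (1 - \<alpha>) (x - s) * v' s)
      has_integral - integral {l..r} (\<lambda>s. W s * v'' s) + a * (v r - v l)) {l..r}"
    by simp
  then show "(\<lambda>s. omega (1 - \<alpha>) (x - s) * v' s) integrable_on {l..r}"
    by (rule has_integral_integrable)
  show "\<bar>integral {l..r} (\<lambda>s. omega (1 - \<alpha>) (x - s) * v' s) - a * (v r - v l)\<bar>
      \<le> c * integral {l..r} (\<lambda>s. (s - l) * \<bar>v'' s\<bar>)"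
    using integral_unique[OF cell] abs_integral_weight_mult_v''_le[OF assms(3,4) rT Wc Wb] by simp
qed

end

lemma tmid_between:
  assumes "1 \<le> n" "t (n - 1) < t n"
  shows "t (n - 1) < tmid t n" "tmid t n < t n"
  using assms by (auto simp: tmid_def tau_def field_simps)

lemma tmid_diff_eq_tauh:
  assumes "1 \<le> k"
  shows "tmid t k - tmid t (k - 1) = tauh t k"
proof (cases "k = 1")
  case False
  then obtain m where "k = Suc (Suc m)"
    using assms by (metis One_nat_def Suc_le_D not0_implies_Suc)
  then show ?thesis
    by (simp add: tmid_def tauh_def tau_def field_simps)
qed (simp add: tmid_def tauh_def tau_def)

locale graded_mesh =
  fixes t :: "nat \<Rightarrow> real" and N :: nat
  assumes t_0: "t 0 = 0"
    and t_strict: "\<And>n. 1 \<le> n \<Longrightarrow> n \<le> N \<Longrightarrow> t (n - 1) < t n"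
    and tau_mono: "\<And>n. 2 \<le> n \<Longrightarrow> n \<le> N \<Longrightarrow> tau t (n - 1) \<le> tau t n"
begin

lemma tmid_0: "tmid t 0 = 0"
  by (simp add: tmid_def t_0)

lemma tmid_strict_step:
  assumes "1 \<le> k" "k \<le> N"
  shows "tmid t (k - 1) < tmid t k"
proof (cases "k = 1")
  case True
  then show ?thesis
    using t_strict[of 1] assms by (simp add: tmid_def tau_def)
next
  case False
  then have "tmid t (k - 1) < t (k - 1)"
    using tmid_between(2)[of "k - 1" t] t_strict[of "k - 1"] assms by simp
  also have "t (k - 1) < tmid t k"
    using tmid_between(1)[of k t] t_strict[of k] assms by simp
  finally show ?thesis .
qed

lemma tmid_mono:
  assumes "i \<le> k" "k \<le> N"
  shows "tmid t i \<le> tmid t k"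
  using assms
proof (induction k)
  case (Suc k)
  show ?case
  proof (cases "i = Suc k")
    case False
    then have "tmid t i \<le> tmid t k"
      using Suc by simp
    also have "tmid t k < tmid t (Suc k)"
      using tmid_strict_step[of "Suc k"] Suc.prems by simp
    finally show ?thesis
      by simp
  qed simp
qed simp

lemma tmid_nonneg: "k \<le> N \<Longrightarrow> 0 \<le> tmid t k"
  using tmid_mono[of 0 k] tmid_0 by simp

lemma tauh_mono:
  assumes "1 \<le> k" "k + 1 \<le> N"
  shows "tauh t k \<le> tauh t (k + 1)"
proof (cases "k = 1")
  case True
  then show ?thesis
    using t_strict[of 2] assms by (simp add: tauh_def tau_def numeral_2_eq_2)
next
  case False
  then have "tau t (k - 1) \<le> tau t k" "tau t k \<le> tau t (k + 1)"
    using tau_mono[of k] tau_mono[of "k + 1"] assms by auto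
  then show ?thesis
    using False assms by (simp add: tauh_def)
qed

lemma acoef_eq_kernel_mean:
  assumes "\<alpha> < 1" "1 \<le> k" "k \<le> n" "n \<le> N"
  shows "acoef t \<alpha> n k = kernel_mean \<alpha> (tmid t n) (tmid t (k - 1)) (tmid t k)"
proof -
  have "integral {tmid t (k - 1)..tmid t k} (\<lambda>s. omega (1 - \<alpha>) (tmid t n - s))
      = kernel_primitive \<alpha> (tmid t n) (tmid t k) - kernel_primitive \<alpha> (tmid t n) (tmid t (k - 1))"
    using assms tmid_strict_step[of k] tmid_mono[of k n]
    by (intro integral_unique kernel_primitive_has_integral) auto
  then show ?thesis
    using tmid_diff_eq_tauh[OF assms(2), of t] by (simp add: acoef_def kernel_mean_def)
qed

lemma acoef_succ_lower_bound:
  assumes "0 < \<alpha>" "\<alpha> < 1" "1 \<le> k" "k < n" "n \<le> N"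
  shows "2 * acoef t \<alpha> n k - omega (1 - \<alpha>) (tmid t n - tmid t (k - 1)) \<le> acoef t \<alpha> n (k + 1)"
proof -
  have "2 * kernel_mean \<alpha> (tmid t n) (tmid t (k - 1)) (tmid t k)
        - omega (1 - \<alpha>) (tmid t n - tmid t (k - 1))
      \<le> kernel_mean \<alpha> (tmid t n) (tmid t k) (tmid t k + tauh t (k + 1))"
  proof (rule kernel_mean_succ_lower_bound)
    show "tmid t (k - 1) < tmid t k"
      using tmid_strict_step[of k] assms by simp
    show "tmid t k - tmid t (k - 1) \<le> tauh t (k + 1)"
      using tauh_mono[of k] tmid_diff_eq_tauh[of k t] assms by simp
    show "tmid t k + tauh t (k + 1) \<le> tmid t n"
      using tmid_mono[of "k + 1" n] tmid_diff_eq_tauh[of "k + 1" t] assms by simp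
  qed (use assms in auto)
  then show ?thesis
    using acoef_eq_kernel_mean[of \<alpha> k n] acoef_eq_kernel_mean[of \<alpha> "k + 1" n]
      tmid_diff_eq_tauh[of "k + 1" t] assms
    by (simp add: algebra_simps)
qed

end

locale l1_consistency = graded_mesh t N + weakly_regular T v v' v''
  for t :: "nat \<Rightarrow> real" and N :: nat and T :: real and v v' v'' :: "real \<Rightarrow> real" +
  assumes t_N: "t N = T"
begin

lemma tmid_less_T:
  assumes "n \<le> N"
  shows "tmid t n < T"
proof (cases "N = 0")
  case True
  then show ?thesis
    using assms tmid_0 T_pos by simp
next
  case False
  then have "tmid t N < t N"
    using tmid_between(2)[of N t] t_strict[of N] by simp
  then show ?thesis
    using tmid_mono[OF assms] t_N by simp
qed

lemma caputo_tmid_eq_sum_cells: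
  assumes "0 < \<alpha>" "\<alpha> < 1" "j \<le> N"
  shows "caputo \<alpha> v (tmid t j)
    = (\<Sum>k=1..j. integral {tmid t (k - 1)..tmid t k} (\<lambda>s. omega (1 - \<alpha>) (tmid t j - s) * v' s))"
proof -
  have cells: "((\<lambda>s. omega (1 - \<alpha>) (tmid t j - s) * v' s) has_integral
      (\<Sum>k=1..j. integral {tmid t (k - 1)..tmid t k} (\<lambda>s. omega (1 - \<alpha>) (tmid t j - s) * v' s)))
      {tmid t 0..tmid t j}"
  proof (rule has_integral_sum_consecutive)
    fix k
    assume k: "1 \<le> k" "k \<le> j"
    then show "tmid t (k - 1) \<le> tmid t k"
      using tmid_strict_step[of k] assms by simp
    show "(\<lambda>s. omega (1 - \<alpha>) (tmid t j - s) * v' s) integrable_on {tmid t (k - 1)..tmid t k}"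
      using k assms tmid_nonneg[of "k - 1"] tmid_strict_step[of k] tmid_mono[of k j] tmid_less_T[of j]
      by (intro kernel_cell_error(1)[OF assms(1,2) _ _ _ _ order.refl]) auto
  qed
  have "((\<lambda>s. omega (1 - \<alpha>) (tmid t j - s) * deriv v s) has_integral
      (\<Sum>k=1..j. integral {tmid t (k - 1)..tmid t k} (\<lambda>s. omega (1 - \<alpha>) (tmid t j - s) * v' s)))
      {0..tmid t j}"
  proof (rule has_integral_spike_finite[of "{0, tmid t j}"])
    show "((\<lambda>s. omega (1 - \<alpha>) (tmid t j - s) * v' s) has_integral
      (\<Sum>k=1..j. integral {tmid t (k - 1)..tmid t k} (\<lambda>s. omega (1 - \<alpha>) (tmid t j - s) * v' s)))
      {0..tmid t j}"
      using cells tmid_0 by simp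
  next
    fix s
    assume "s \<in> {0..tmid t j} - {0, tmid t j}"
    then have "deriv v s = v' s"
      using tmid_less_T[OF assms(3)] by (intro DERIV_imp_deriv v1_at) auto
    then show "omega (1 - \<alpha>) (tmid t j - s) * deriv v s = omega (1 - \<alpha>) (tmid t j - s) * v' s"
      by simp
  qed simp
  then show ?thesis
    unfolding caputo_def by (rule integral_unique)
qed

lemma abs_cell_error_le:
  assumes "0 < \<alpha>" "\<alpha> < 1" "1 \<le> k" "k \<le> j" "j \<le> N"
    and "acoef t \<alpha> j k - omega (1 - \<alpha>) (tmid t j - tmid t (k - 1)) \<le> c"
  shows "\<bar>integral {tmid t (k - 1)..tmid t k} (\<lambda>s. omega (1 - \<alpha>) (tmid t j - s) * v' s)
      - acoef t \<alpha> j k * (v (tmid t k) - v (tmid t (k - 1)))\<bar>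
    \<le> c * integral {tmid t (k - 1)..tmid t k} (\<lambda>s. (s - tmid t (k - 1)) * \<bar>v'' s\<bar>)"
  unfolding acoef_eq_kernel_mean[OF assms(2-4) assms(5)]
  using assms acoef_eq_kernel_mean[OF assms(2-4) assms(5)] tmid_nonneg[of "k - 1"]
    tmid_strict_step[of k] tmid_mono[of k j] tmid_less_T[of j]
  by (intro kernel_cell_error(2)) auto

lemma abs_Rerr_le:
  assumes "0 < \<alpha>" "\<alpha> < 1" "1 \<le> j" "j \<le> N"
  shows "\<bar>Rerr t \<alpha> v j\<bar> \<le>
      (\<Sum>k=1..j-1. (acoef t \<alpha> j (k + 1) - acoef t \<alpha> j k) *
          integral {tmid t (k - 1)..tmid t k} (\<lambda>s. (s - tmid t (k - 1)) * \<bar>v'' s\<bar>))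
      + acoef t \<alpha> j j *
          integral {tmid t (j - 1)..tmid t j} (\<lambda>s. (s - tmid t (j - 1)) * \<bar>v'' s\<bar>)"
proof -
  define a where "a k = acoef t \<alpha> j k" for k
  define K where "K k = omega (1 - \<alpha>) (tmid t j - tmid t (k - 1))" for k
  define G where "G k = integral {tmid t (k - 1)..tmid t k} (\<lambda>s. (s - tmid t (k - 1)) * \<bar>v'' s\<bar>)"
    for k
  define e where "e k = integral {tmid t (k - 1)..tmid t k} (\<lambda>s. omega (1 - \<alpha>) (tmid t j - s) * v' s)
      - a k * (v (tmid t k) - v (tmid t (k - 1)))" for k
  have cell: "\<bar>e k\<bar> \<le> c * G k" if "1 \<le> k" "k \<le> j" "a k - K k \<le> c" for k c
    using abs_cell_error_le[OF assms(1,2)] that assms unfolding e_def G_def a_def K_def by blast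
  have "Rerr t \<alpha> v j = (\<Sum>k=1..j. e k)"
    unfolding Rerr_def caputo_tmid_eq_sum_cells[OF assms(1,2,4)] e_def a_def
    by (simp add: sum_subtractf)
  also have "\<dots> = (\<Sum>k=1..j-1. e k) + e j"
    using assms(3) by (cases j) (simp_all add: sum.cl_ivl_Suc)
  finally have "\<bar>Rerr t \<alpha> v j\<bar> \<le> (\<Sum>k=1..j-1. \<bar>e k\<bar>) + \<bar>e j\<bar>"
    using sum_abs[of e "{1..j-1}"] by linarith
  also have "\<dots> \<le> (\<Sum>k=1..j-1. (a (k + 1) - a k) * G k) + a j * G j"
  proof (intro add_mono sum_mono cell)
    fix k
    assume "k \<in> {1..j-1}"
    then show "1 \<le> k" "k \<le> j" "a k - K k \<le> a (k + 1) - a k"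
      using acoef_succ_lower_bound[OF assms(1,2), of k j] assms
      by (auto simp: a_def K_def)
  next
    show "a j - K j \<le> a j"
      using omega_one_minus_pos[OF assms(2), of "tmid t (j - 1)" "tmid t j"] tmid_strict_step[of j] assms
      by (simp add: K_def)
  qed (use assms in auto)
  finally show ?thesis
    unfolding a_def G_def .
qed

end

theorem mainTheorem6:
  fixes T \<alpha> :: real and N :: nat and t :: "nat \<Rightarrow> real"
    and v v' v'' :: "real \<Rightarrow> real"
  assumes T_pos: "0 < T"
    and alpha: "0 < \<alpha>" "\<alpha> < 1"
    and N_pos: "1 \<le> N"
    and t0: "t 0 = 0" and tN: "t N = T"
    and t_incr: "\<And>n. 1 \<le> n \<Longrightarrow> n \<le> N \<Longrightarrow> t (n - 1) < t n"
    and tau_mono: "\<And>n. 2 \<le> n \<Longrightarrow> n \<le> N \<Longrightarrow> tau t (n - 1) \<le> tau t n"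
    and v_cont: "continuous_on {0..T} v"
    and v1: "\<And>s. s \<in> {0<..T} \<Longrightarrow> (v has_real_derivative v' s) (at s within {0..T})"
    and v2: "\<And>s. s \<in> {0<..T} \<Longrightarrow> (v' has_real_derivative v'' s) (at s within {0..T})"
    and v2_cont: "continuous_on {0<..T} v''"
    and v2_int: "(\<lambda>s. s * \<bar>v'' s\<bar>) integrable_on {0..T}"
  shows "\<forall>j. 1 \<le> j \<and> j \<le> N \<longrightarrow>
    \<bar>Rerr t \<alpha> v j\<bar> \<le>
      (\<Sum>k=1..j-1. (acoef t \<alpha> j (k + 1) - acoef t \<alpha> j k) *
          integral {tmid t (k - 1)..tmid t k} (\<lambda>s. (s - tmid t (k - 1)) * \<bar>v'' s\<bar>))
      + acoef t \<alpha> j j *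
          integral {tmid t (j - 1)..tmid t j} (\<lambda>s. (s - tmid t (j - 1)) * \<bar>v'' s\<bar>)"
proof -
  interpret l1_consistency t N T v v' v''
    using T_pos t0 tN t_incr tau_mono v_cont v1 v2 v2_cont v2_int by unfold_locales
  show ?thesis
    using abs_Rerr_le[OF alpha] by blast
qed

end
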